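(* Let $X$ be a compact metric space and $f\colon X\to X$ a positively $n$-expansive homeomorphism which has the shadowing property and admits only finitely many chain recurrent classes. Then $X$ is finite.
   Context: $f$ is positively $n$-expansive if there exists $c>0$ such that for every $x\in X$ the set $W^s_c(x)=\{y: d(f^k(y),f^k(x))\leq c \ \forall k\geq0\}$ has at most $n$ points. $f$ has the shadowing property if for every $\varepsilon>0$ there is $\delta>0$ such that for every $(x_k)_{k\in\mathbb{Z}}$ with $d(f(x_k),x_{k+1})<\delta$ for all $k$ there is $y$ with $d(f^k(y),x_k)<\varepsilon$ for all $k$. A point $x$ is chain recurrent if for each $\varepsilon>0$ there is a nontrivial finite $\varepsilon$-pseudo orbit (a sequence $x_0,\dots,x_l$ with $d(f(x_k),x_{k+1})<\varepsilon$) starting and ending at $x$. The chain recurrent class of a chain recurrent point $x$ is the set of $y$ such that for every $\varepsilon>0$ there is a periodic $\varepsilon$-pseudo orbit containing both $x$ and $y$; the chain recurrent set is partitioned into these classes. *)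

theory Defs
  imports "HOL-Analysis.Analysis"
begin

definition pos_n_expansive :: "'a::metric_space set \<Rightarrow> ('a \<Rightarrow> 'a) \<Rightarrow> nat \<Rightarrow> bool" where
  "pos_n_expansive X f n \<longleftrightarrow> (\<exists>c>0. \<forall>x\<in>X.
     finite {y\<in>X. \<forall>k. dist ((f ^^ k) y) ((f ^^ k) x) \<le> c} \<and>
     card {y\<in>X. \<forall>k. dist ((f ^^ k) y) ((f ^^ k) x) \<le> c} \<le> n)"

definition zpow_iter :: "'a set \<Rightarrow> ('a \<Rightarrow> 'a) \<Rightarrow> int \<Rightarrow> 'a \<Rightarrow> 'a" where
  "zpow_iter X f k = (if k \<ge> 0 then f ^^ nat k else (inv_into X f) ^^ nat (- k))"

definition shadowing :: "'a::metric_space set \<Rightarrow> ('a \<Rightarrow> 'a) \<Rightarrow> bool" where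
  "shadowing X f \<longleftrightarrow> (\<forall>\<epsilon>>0. \<exists>\<delta>>0. \<forall>xs :: int \<Rightarrow> 'a.
     (\<forall>k. xs k \<in> X) \<and> (\<forall>k. dist (f (xs k)) (xs (k + 1)) < \<delta>) \<longrightarrow>
     (\<exists>y\<in>X. \<forall>k. dist (zpow_iter X f k y) (xs k) < \<epsilon>))"

definition pseudo_orbit :: "'a::metric_space set \<Rightarrow> ('a \<Rightarrow> 'a) \<Rightarrow> real \<Rightarrow> 'a list \<Rightarrow> bool" where
  "pseudo_orbit X f \<epsilon> xs \<longleftrightarrow> length xs \<ge> 2 \<and> set xs \<subseteq> X \<and>
     (\<forall>i. Suc i < length xs \<longrightarrow> dist (f (xs ! i)) (xs ! Suc i) < \<epsilon>)"

definition chain_recurrent :: "'a::metric_space set \<Rightarrow> ('a \<Rightarrow> 'a) \<Rightarrow> 'a \<Rightarrow> bool" where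
  "chain_recurrent X f x \<longleftrightarrow> x \<in> X \<and> (\<forall>\<epsilon>>0. \<exists>xs. pseudo_orbit X f \<epsilon> xs \<and> hd xs = x \<and> last xs = x)"

definition chain_class :: "'a::metric_space set \<Rightarrow> ('a \<Rightarrow> 'a) \<Rightarrow> 'a \<Rightarrow> 'a set" where
  "chain_class X f x = {y. \<forall>\<epsilon>>0. \<exists>xs. pseudo_orbit X f \<epsilon> xs \<and> hd xs = last xs \<and>
      x \<in> set xs \<and> y \<in> set xs}"

end

theory Submission
  imports Defs
begin

text \<open>
  Periodic points are finite: if p, q are periodic and close, the pseudo orbits that follow
  the orbit of p except on the single period block -(j + 1), where they follow q, are shadowed
  within c/2. All these shadows follow p in forward time, so they lie in one c-stable set,
  which has at most n points; hence two of the pseudo orbits (for i \<noteq> j) have the same shadow,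
  which on block -(j + 1) is c/2-close to the orbits of both p and q. So q lies in the finite
  stable set of p, and periodic points cannot accumulate.

  Every point is periodic: repeating forever an orbit segment that almost returns gives a
  periodic pseudo orbit whose shadow has a periodic point in its orbit, so every orbit
  eventually stays near the finite, separated set of periodic points and, by uniform
  continuity, follows a single periodic orbit. Its iterates along the period then lie in a
  finite stable set, so two coincide and injectivity makes the point periodic.
\<close>

lemma funpow_add_apply: "(f ^^ (m + n)) x = (f ^^ m) ((f ^^ n) x)"
  by (simp add: funpow_add)

lemma funpow_swap_apply: "(f ^^ m) ((f ^^ n) x) = (f ^^ n) ((f ^^ m) x)"
  by (metis add.commute funpow_add_apply)

lemma funpow_in_set:
  assumes "\<And>x. x \<in> X \<Longrightarrow> f x \<in> X" "x \<in> X"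
  shows "(f ^^ k) x \<in> X"
  by (induction k) (simp_all add: assms)

lemma inj_on_funpow:
  assumes "inj_on f X" "\<And>x. x \<in> X \<Longrightarrow> f x \<in> X"
  shows "inj_on (f ^^ N) X"
proof (induction N)
  case (Suc N)
  have "inj_on f ((f ^^ N) ` X)"
    using assms by (auto intro: inj_on_subset funpow_in_set)
  then show ?case using Suc comp_inj_on by (metis funpow.simps(2))
qed simp

definition periodic_points :: "'a set \<Rightarrow> ('a \<Rightarrow> 'a) \<Rightarrow> 'a set" where
  "periodic_points X f = {x\<in>X. \<exists>m>0. (f ^^ m) x = x}"

lemma periodic_pointsI:
  assumes "x \<in> X" "m > 0" "(f ^^ m) x = x"
  shows "x \<in> periodic_points X f"
  using assms by (auto simp: periodic_points_def)

lemma periodic_points_funpow: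
  assumes "\<And>x. x \<in> X \<Longrightarrow> f x \<in> X" "x \<in> periodic_points X f"
  shows "(f ^^ k) x \<in> periodic_points X f"
proof -
  obtain m where "x \<in> X" "m > 0" "(f ^^ m) x = x"
    using assms(2) by (auto simp: periodic_points_def)
  moreover have "(f ^^ m) ((f ^^ k) x) = (f ^^ k) ((f ^^ m) x)"
    by (rule funpow_swap_apply)
  ultimately show ?thesis
    by (auto intro: periodic_pointsI funpow_in_set assms(1))
qed

lemma periodic_points_common_period:
  assumes "p \<in> periodic_points X f" "q \<in> periodic_points X f"
  obtains L where "L > 0" "(f ^^ L) p = p" "(f ^^ L) q = q"
proof -
  obtain a b where "a > 0" and a: "(f ^^ a) p = p" and "b > 0" and b: "(f ^^ b) q = q"
    using assms by (auto simp: periodic_points_def)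
  then show ?thesis
    using that[of "a * b"] funpow_mod_eq[where m = "a * b", OF a] funpow_mod_eq[where m = "a * b", OF b]
    by simp
qed

lemma periodic_point_if_iterates_repeat:
  assumes "x \<in> X" "\<And>x. x \<in> X \<Longrightarrow> f x \<in> X" "a < b" "(f ^^ a) x = (f ^^ b) x"
  shows "(f ^^ a) x \<in> periodic_points X f"
proof (rule periodic_pointsI)
  have "(f ^^ (b - a)) ((f ^^ a) x) = (f ^^ b) x"
    using assms(3) by (simp flip: funpow_add_apply)
  then show "(f ^^ (b - a)) ((f ^^ a) x) = (f ^^ a) x" using assms(4) by simp
qed (use assms in \<open>auto intro: funpow_in_set\<close>)

lemma periodic_if_iterate_periodic:
  assumes "inj_on f X" "\<And>x. x \<in> X \<Longrightarrow> f x \<in> X" "x \<in> X"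
    and "(f ^^ N) x \<in> periodic_points X f"
  shows "x \<in> periodic_points X f"
proof -
  obtain m where m: "m > 0" "(f ^^ m) ((f ^^ N) x) = (f ^^ N) x"
    using assms(4) by (auto simp: periodic_points_def)
  then have "(f ^^ N) ((f ^^ m) x) = (f ^^ N) x"
    by (simp add: funpow_swap_apply)
  then have "(f ^^ m) x = x"
    using inj_on_funpow[OF assms(1,2)] assms(3) by (auto intro: funpow_in_set assms(2) dest: inj_onD)
  with assms(3) m(1) show ?thesis by (rule periodic_pointsI)
qed

definition stable_set :: "'a::metric_space set \<Rightarrow> ('a \<Rightarrow> 'a) \<Rightarrow> real \<Rightarrow> 'a \<Rightarrow> 'a set" where
  "stable_set X f c x = {y\<in>X. \<forall>k. dist ((f ^^ k) y) ((f ^^ k) x) \<le> c}"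

lemma mem_stable_set_if_shadow_same:
  assumes "z \<in> X" "\<And>k. dist ((f ^^ k) y) (s k) \<le> c / 2" "\<And>k. dist ((f ^^ k) z) (s k) \<le> c / 2"
  shows "z \<in> stable_set X f c y"
proof -
  have "dist ((f ^^ k) z) ((f ^^ k) y) \<le> c" for k
    using dist_triangle2[of "(f ^^ k) z" "(f ^^ k) y" "s k"] assms(2,3)[of k] by linarith
  then show ?thesis using assms(1) by (simp add: stable_set_def)
qed

lemma repetition_in_finite_set:
  fixes h :: "nat \<Rightarrow> 'a"
  assumes "\<And>m. h m \<in> A" "finite A"
  obtains m1 m2 where "m1 < m2" "h m1 = h m2"
proof -
  have "\<not> inj h"
    using assms finite_imageD[of h UNIV] finite_subset[of "range h" A] by auto
  then obtain a b where "a \<noteq> b" "h a = h b" unfolding inj_def by blast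
  then show ?thesis using that by (metis linorder_neqE_nat)
qed

lemma periodic_point_if_multiples_in_finite_set:
  assumes "x \<in> X" "\<And>x. x \<in> X \<Longrightarrow> f x \<in> X" "D > 0"
    and "\<And>m. (f ^^ (m * D)) x \<in> A" "finite A"
  shows "\<exists>m. (f ^^ (m * D)) x \<in> periodic_points X f"
proof -
  obtain m1 m2 where "m1 < m2" "(f ^^ (m1 * D)) x = (f ^^ (m2 * D)) x"
    using repetition_in_finite_set[of "\<lambda>m. (f ^^ (m * D)) x"] assms(4,5) by blast
  then show ?thesis
    using periodic_point_if_iterates_repeat[of x X f "m1 * D" "m2 * D"] assms(1-3) by auto
qed

lemma compact_close_pair_along_infinite_set:
  fixes S :: "nat set"
  assumes "compact X" "\<And>k. u k \<in> X" "infinite S" "\<delta> > 0"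
  shows "\<exists>a\<in>S. \<exists>b\<in>S. a < b \<and> dist (u a) (u b) < \<delta>"
proof -
  define s where "s = enumerate S"
  have s: "strict_mono s" "\<And>i. s i \<in> S"
    using strict_mono_enumerate enumerate_in_set assms(3) by (auto simp: s_def)
  have "\<forall>i. (u \<circ> s) i \<in> X" using assms(2) by simp
  then obtain l r where r: "strict_mono r" and lim: "(u \<circ> s \<circ> r) \<longlonglongrightarrow> l"
    using compact_imp_seq_compact[OF assms(1)] unfolding seq_compact_def by blast
  obtain M where M: "\<forall>m\<ge>M. \<forall>m'\<ge>M. dist ((u \<circ> s \<circ> r) m) ((u \<circ> s \<circ> r) m') < \<delta>"
    using assms(4) LIMSEQ_imp_Cauchy[OF lim] unfolding Cauchy_def by blast
  have "s (r M) < s (r (Suc M))"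
    using s(1) r by (simp add: strict_mono_def)
  moreover have "dist (u (s (r M))) (u (s (r (Suc M)))) < \<delta>"
    using M by simp
  ultimately show ?thesis using s(2) by blast
qed

lemma finite_set_separated:
  fixes S :: "'a::metric_space set"
  assumes "finite S"
  shows "\<exists>\<eta>>0. \<forall>p\<in>S. \<forall>q\<in>S. p \<noteq> q \<longrightarrow> \<eta> \<le> dist p q"
  using assms
proof (induction rule: finite_induct)
  case (insert x S)
  obtain \<eta> where "\<eta> > 0" "\<forall>p\<in>S. \<forall>q\<in>S. p \<noteq> q \<longrightarrow> \<eta> \<le> dist p q"
    using insert.IH by blast
  moreover obtain \<delta> where "\<delta> > 0" "\<forall>q\<in>S. q \<noteq> x \<longrightarrow> \<delta> \<le> dist x q"
    using finite_set_avoid[OF insert.hyps(1)] by blast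
  ultimately have "\<forall>p\<in>insert x S. \<forall>q\<in>insert x S. p \<noteq> q \<longrightarrow> min \<eta> \<delta> \<le> dist p q"
    by (metis dist_commute insert_iff min.coboundedI1 min.coboundedI2)
  then show ?case using \<open>\<eta> > 0\<close> \<open>\<delta> > 0\<close> by (metis min_less_iff_conj)
qed (auto intro: zero_less_one)

lemma orbit_tracks_single_orbit:
  assumes maps: "\<And>x. x \<in> X \<Longrightarrow> f x \<in> X" and "x \<in> X"
    and P: "P \<subseteq> X" "\<And>p. p \<in> P \<Longrightarrow> f p \<in> P"
    and sep: "\<And>p q. p \<in> P \<Longrightarrow> q \<in> P \<Longrightarrow> p \<noteq> q \<Longrightarrow> \<epsilon> + \<rho> \<le> dist p q"
    and cont: "\<And>u v. u \<in> X \<Longrightarrow> v \<in> X \<Longrightarrow> dist u v < \<rho> \<Longrightarrow> dist (f u) (f v) < \<epsilon>"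
    and near: "\<And>k. k \<ge> K \<Longrightarrow> \<exists>p\<in>P. dist ((f ^^ k) x) p < \<rho>"
  shows "\<exists>w\<in>P. \<forall>i. dist ((f ^^ (K + i)) x) ((f ^^ i) w) < \<rho>"
proof -
  obtain w where w: "w \<in> P" "dist ((f ^^ K) x) w < \<rho>" using near by blast
  have "dist ((f ^^ (K + i)) x) ((f ^^ i) w) < \<rho>" for i
  proof (induction i)
    case (Suc i)
    define q where "q = (f ^^ i) w"
    have "q \<in> P" unfolding q_def by (rule funpow_in_set[OF P(2) w(1)])
    obtain p where p: "p \<in> P" "dist ((f ^^ Suc (K + i)) x) p < \<rho>"
      using near[of "Suc (K + i)"] by (auto simp del: funpow.simps)
    have "dist ((f ^^ Suc (K + i)) x) (f q) < \<epsilon>"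
      using cont[OF funpow_in_set[OF maps \<open>x \<in> X\<close>]] \<open>q \<in> P\<close> P(1) Suc.IH by (auto simp: q_def)
    then have "dist (f q) p < \<epsilon> + \<rho>"
      using dist_triangle3[of "f q" p "(f ^^ Suc (K + i)) x"] p(2) by linarith
    then have "f q = p" using sep[OF P(2)[OF \<open>q \<in> P\<close>] p(1)] by fastforce
    then show ?case using p(2) by (simp add: q_def)
  qed (simp add: w(2))
  then show ?thesis using w(1) by blast
qed

lemma zpow_iter_of_nat [simp]: "zpow_iter X f (int k) = f ^^ k"
  by (simp add: zpow_iter_def)

lemma shadowingE:
  assumes "shadowing X f" "\<epsilon> > 0"
  obtains \<delta> where "\<delta> > 0"
    "\<And>xs. (\<And>k. xs k \<in> X) \<Longrightarrow> (\<And>k. dist (f (xs k)) (xs (k + 1)) < \<delta>) \<Longrightarrow>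
       \<exists>y\<in>X. \<forall>k. dist (zpow_iter X f k y) (xs k) < \<epsilon>"
  using assms unfolding shadowing_def by metis

definition orbit_blocks :: "('a \<Rightarrow> 'a) \<Rightarrow> nat \<Rightarrow> (int \<Rightarrow> 'a) \<Rightarrow> int \<Rightarrow> 'a" where
  "orbit_blocks f L \<sigma> t = (f ^^ nat (t mod int L)) (\<sigma> (t div int L))"

lemma orbit_blocks_eval:
  assumes "0 \<le> r" "r < int L"
  shows "orbit_blocks f L \<sigma> (int L * b + r) = (f ^^ nat r) (\<sigma> b)"
  using assms by (simp add: orbit_blocks_def)

lemma orbit_blocks_of_nat:
  "orbit_blocks f L \<sigma> (int k) = (f ^^ (k mod L)) (\<sigma> (int (k div L)))"
  by (simp add: orbit_blocks_def flip: of_nat_mod of_nat_div)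

lemma orbit_blocks_pseudo_orbit:
  assumes "L > 0" "\<delta> > 0" "\<And>b. dist ((f ^^ L) (\<sigma> b)) (\<sigma> (b + 1)) < \<delta>"
  shows "dist (f (orbit_blocks f L \<sigma> t)) (orbit_blocks f L \<sigma> (t + 1)) < \<delta>"
proof -
  define b r where "b = t div int L" and "r = t mod int L"
  have t: "t = int L * b + r" and r: "0 \<le> r" "r < int L"
    using assms(1) by (simp_all add: b_def r_def)
  show ?thesis
  proof (cases "r + 1 = int L")
    case True
    then have "t + 1 = int L * (b + 1) + 0" by (simp add: t algebra_simps)
    moreover have "L = Suc (nat r)" using True r by linarith
    then have "f (orbit_blocks f L \<sigma> t) = (f ^^ L) (\<sigma> b)"
      using orbit_blocks_eval[OF r, of f \<sigma> b] by (simp add: t)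
    ultimately show ?thesis using assms(1,3) orbit_blocks_eval[of 0 L f \<sigma> "b + 1"] by simp
  next
    case False
    then have "t + 1 = int L * b + (r + 1)" "r + 1 < int L" using t r by auto
    then have "orbit_blocks f L \<sigma> (t + 1) = (f ^^ nat (r + 1)) (\<sigma> b)"
      using r by (metis orbit_blocks_eval add_nonneg_nonneg zero_le_one)
    also have "\<dots> = f (orbit_blocks f L \<sigma> t)"
      using r by (simp add: t orbit_blocks_eval nat_add_distrib)
    finally show ?thesis using assms(2) by simp
  qed
qed

locale positively_expansive_shadowing =
  fixes X :: "'a::metric_space set" and f :: "'a \<Rightarrow> 'a" and c :: real and n :: nat
  assumes compact: "compact X"
    and maps: "\<And>x. x \<in> X \<Longrightarrow> f x \<in> X"
    and c_pos: "c > 0"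
    and finite_stable_set: "\<And>x. x \<in> X \<Longrightarrow> finite (stable_set X f c x)"
    and card_stable_set: "\<And>x. x \<in> X \<Longrightarrow> card (stable_set X f c x) \<le> n"
    and shadowing: "shadowing X f"
begin

lemma funpow_in_X: "x \<in> X \<Longrightarrow> (f ^^ k) x \<in> X"
  using funpow_in_set[where f = f, OF maps] .

lemma stable_set_collision:
  assumes "x \<in> X" "\<And>j. j \<le> n \<Longrightarrow> y j \<in> stable_set X f c x"
  obtains i j where "i \<le> n" "j \<le> n" "i \<noteq> j" "y i = y j"
proof -
  have "card (y ` {..n}) \<le> card (stable_set X f c x)"
    using assms finite_stable_set by (auto intro: card_mono)
  then have "card (y ` {..n}) < card {..n}"
    using card_stable_set[OF assms(1)] by simp
  then show ?thesis using pigeonhole that unfolding inj_on_def by blast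
qed

lemma close_periodic_points_stable:
  obtains \<delta> where "\<delta> > 0" "\<And>p q. p \<in> periodic_points X f \<Longrightarrow> q \<in> periodic_points X f \<Longrightarrow>
    dist p q < \<delta> \<Longrightarrow> q \<in> stable_set X f c p"
proof -
  obtain \<delta> where "\<delta> > 0" and shadow: "\<And>xs. (\<And>k. xs k \<in> X) \<Longrightarrow>
      (\<And>k. dist (f (xs k)) (xs (k + 1)) < \<delta>) \<Longrightarrow> \<exists>y\<in>X. \<forall>k. dist (zpow_iter X f k y) (xs k) < c / 2"
    using shadowingE[OF shadowing] c_pos by (metis half_gt_zero)
  have "q \<in> stable_set X f c p"
    if pq: "p \<in> periodic_points X f" "q \<in> periodic_points X f" "dist p q < \<delta>" for p q
  proof -
    have "p \<in> X" "q \<in> X" using pq(1,2) by (simp_all add: periodic_points_def)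
    obtain L where L: "L > 0" "(f ^^ L) p = p" "(f ^^ L) q = q"
      using periodic_points_common_period[OF pq(1,2)] by blast
    define \<sigma> where "\<sigma> j \<beta> = (if \<beta> = - int j - 1 then q else p)" for j :: nat and \<beta> :: int
    have "\<exists>y\<in>X. \<forall>t. dist (zpow_iter X f t y) (orbit_blocks f L (\<sigma> j) t) < c / 2" for j
    proof (rule shadow)
      show "orbit_blocks f L (\<sigma> j) t \<in> X" for t
        using \<open>p \<in> X\<close> \<open>q \<in> X\<close> by (simp add: orbit_blocks_def \<sigma>_def funpow_in_X)
      have "dist ((f ^^ L) (\<sigma> j \<beta>)) (\<sigma> j (\<beta> + 1)) < \<delta>" for \<beta>
        using L \<open>\<delta> > 0\<close> pq(3) by (simp add: \<sigma>_def dist_commute)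
      then show "dist (f (orbit_blocks f L (\<sigma> j) t)) (orbit_blocks f L (\<sigma> j) (t + 1)) < \<delta>" for t
        using orbit_blocks_pseudo_orbit L(1) \<open>\<delta> > 0\<close> by blast
    qed
    then obtain y where y: "\<And>j. y j \<in> X"
      and y_shadow: "\<And>j t. dist (zpow_iter X f t (y j)) (orbit_blocks f L (\<sigma> j) t) < c / 2"
      by metis
    \<comment> \<open>In forward time all the pseudo orbits follow the orbit of p, so their shadows lie in
      one stable set, and two of the first n + 1 of them coincide.\<close>
    have forward: "orbit_blocks f L (\<sigma> j) (int k) = (f ^^ k) p" for j k
      using L(2) by (simp add: orbit_blocks_of_nat \<sigma>_def funpow_mod_eq)
    have shadow_p: "dist ((f ^^ k) (y j)) ((f ^^ k) p) \<le> c / 2" for j k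
      using y_shadow[where j = j and t = "int k"] by (simp add: forward)
    have "y j \<in> stable_set X f c (y 0)" for j
      by (rule mem_stable_set_if_shadow_same[OF y shadow_p shadow_p])
    then obtain i j where "i \<noteq> j" "y i = y j"
      using stable_set_collision y by metis
    have "dist ((f ^^ r) q) ((f ^^ r) p) \<le> c" if "r < L" for r
    proof -
      define t where "t = int L * (- int j - 1) + int r"
      have "orbit_blocks f L (\<sigma> j) t = (f ^^ r) q" "orbit_blocks f L (\<sigma> i) t = (f ^^ r) p"
        using that \<open>i \<noteq> j\<close> by (simp_all add: t_def orbit_blocks_eval \<sigma>_def)
      then show ?thesis
        using y_shadow[where j = j and t = t] y_shadow[where j = i and t = t] \<open>y i = y j\<close> dist_triangle_half_l[of _ _ c]
        by (metis dist_commute less_imp_le)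
    qed
    then have "dist ((f ^^ k) q) ((f ^^ k) p) \<le> c" for k
      using L by (metis funpow_mod_eq mod_less_divisor)
    then show ?thesis using \<open>q \<in> X\<close> by (simp add: stable_set_def)
  qed
  then show ?thesis using that \<open>\<delta> > 0\<close> by blast
qed

lemma finite_periodic_points: "finite (periodic_points X f)"
proof (rule ccontr)
  assume "infinite (periodic_points X f)"
  obtain \<delta> where "\<delta> > 0" and stable: "\<And>p q. p \<in> periodic_points X f \<Longrightarrow> q \<in> periodic_points X f \<Longrightarrow>
      dist p q < \<delta> \<Longrightarrow> q \<in> stable_set X f c p"
    using close_periodic_points_stable by blast
  have "periodic_points X f \<subseteq> X" by (auto simp: periodic_points_def)
  then obtain z where "z islimpt periodic_points X f"
    using Heine_Borel_imp_Bolzano_Weierstrass[OF compact \<open>infinite _\<close>] by blast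
  then have near_z: "infinite (periodic_points X f \<inter> ball z (\<delta> / 2))"
    using \<open>\<delta> > 0\<close> by (simp add: islimpt_eq_infinite_ball)
  then obtain p where p: "p \<in> periodic_points X f \<inter> ball z (\<delta> / 2)"
    using infinite_imp_nonempty by blast
  then have "p \<in> X" by (simp add: periodic_points_def)
  then have "infinite (periodic_points X f \<inter> ball z (\<delta> / 2) - stable_set X f c p)"
    using near_z finite_stable_set Diff_infinite_finite by blast
  then obtain q where q: "q \<in> periodic_points X f \<inter> ball z (\<delta> / 2) - stable_set X f c p"
    using infinite_imp_nonempty by blast
  have "dist z p < \<delta> / 2" "dist z q < \<delta> / 2" using p q by auto
  then have "dist p q < \<delta>" by (metis dist_commute dist_triangle_half_l)
  then show False using stable[of p q] p q by simp
qed

lemma periodic_point_near_almost_return: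
  assumes "\<epsilon> > 0"
  obtains \<delta> where "\<delta> > 0" "\<And>x a b. x \<in> X \<Longrightarrow> a < b \<Longrightarrow> dist ((f ^^ a) x) ((f ^^ b) x) < \<delta> \<Longrightarrow>
    \<exists>w\<in>periodic_points X f. dist w ((f ^^ a) x) < \<epsilon>"
proof -
  define \<epsilon>' where "\<epsilon>' = min \<epsilon> (c / 2)"
  have "\<epsilon>' > 0" using assms c_pos by (simp add: \<epsilon>'_def)
  then obtain \<delta> where "\<delta> > 0" and shadow: "\<And>xs. (\<And>k. xs k \<in> X) \<Longrightarrow>
      (\<And>k. dist (f (xs k)) (xs (k + 1)) < \<delta>) \<Longrightarrow> \<exists>y\<in>X. \<forall>k. dist (zpow_iter X f k y) (xs k) < \<epsilon>'"
    using shadowingE[OF shadowing] by blast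
  have "\<exists>w\<in>periodic_points X f. dist w ((f ^^ a) x) < \<epsilon>"
    if x: "x \<in> X" "a < b" "dist ((f ^^ a) x) ((f ^^ b) x) < \<delta>" for x a b
  proof -
    define D where "D = b - a"
    \<comment> \<open>Repeat the orbit segment from time a to time b forever; it closes up within \<delta>.\<close>
    define xs where "xs = orbit_blocks f D (\<lambda>_. (f ^^ a) x)"
    have "D > 0" "(f ^^ D) ((f ^^ a) x) = (f ^^ b) x"
      using x(2) by (simp_all add: D_def flip: funpow_add_apply)
    then have "\<exists>y\<in>X. \<forall>t. dist (zpow_iter X f t y) (xs t) < \<epsilon>'"
      using x \<open>\<delta> > 0\<close> unfolding xs_def
      by (intro shadow orbit_blocks_pseudo_orbit)
        (auto simp: orbit_blocks_def funpow_in_X dist_commute)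
    then obtain y where "y \<in> X" and y: "\<And>t. dist (zpow_iter X f t y) (xs t) < \<epsilon>'"
      by blast
    have xs_period: "xs (int (m * D + k)) = xs (int k)" for m k
      unfolding xs_def orbit_blocks_of_nat by simp
    have shifted: "dist ((f ^^ k) ((f ^^ (m * D)) y)) (xs (int k)) \<le> c / 2" for m k
      using y[of "int (m * D + k)", unfolded zpow_iter_of_nat xs_period] \<epsilon>'_def
      by (simp add: add.commute funpow_add_apply)
    have unshifted: "dist ((f ^^ k) y) (xs (int k)) \<le> c / 2" for k
      using y[of "int k"] \<epsilon>'_def by simp
    have "(f ^^ (m * D)) y \<in> stable_set X f c y" for m
      by (rule mem_stable_set_if_shadow_same[where s = "\<lambda>k. xs (int k)",
            OF funpow_in_X[OF \<open>y \<in> X\<close>] unshifted shifted])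
    then obtain m where "(f ^^ (m * D)) y \<in> periodic_points X f"
      using periodic_point_if_multiples_in_finite_set[where f = f, OF \<open>y \<in> X\<close> maps \<open>D > 0\<close>]
        finite_stable_set[OF \<open>y \<in> X\<close>] by blast
    moreover have "xs (int (m * D)) = (f ^^ a) x"
      using xs_period[of m 0] by (simp add: xs_def orbit_blocks_def)
    moreover have "dist ((f ^^ (m * D)) y) (xs (int (m * D))) < \<epsilon>"
      using y[of "int (m * D)", unfolded zpow_iter_of_nat] \<epsilon>'_def by linarith
    ultimately show ?thesis by auto
  qed
  then show ?thesis using that \<open>\<delta> > 0\<close> by blast
qed

lemma eventually_near_periodic_points:
  assumes "x \<in> X" "\<rho> > 0"
  shows "\<exists>K. \<forall>k\<ge>K. \<exists>p\<in>periodic_points X f. dist ((f ^^ k) x) p < \<rho>"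
proof (rule ccontr)
  define S where "S = {k. \<forall>p\<in>periodic_points X f. \<rho> \<le> dist ((f ^^ k) x) p}"
  assume "\<nexists>K. \<forall>k\<ge>K. \<exists>p\<in>periodic_points X f. dist ((f ^^ k) x) p < \<rho>"
  then have "infinite S"
    unfolding S_def infinite_nat_iff_unbounded_le by (auto simp: not_less)
  obtain \<delta> where "\<delta> > 0" and return: "\<And>a b. a < b \<Longrightarrow> dist ((f ^^ a) x) ((f ^^ b) x) < \<delta> \<Longrightarrow>
      \<exists>w\<in>periodic_points X f. dist w ((f ^^ a) x) < \<rho>"
    using periodic_point_near_almost_return[OF assms(2)] assms(1) by metis
  obtain a b where "a \<in> S" "a < b" "dist ((f ^^ a) x) ((f ^^ b) x) < \<delta>"
    using compact_close_pair_along_infinite_set[where u = "\<lambda>k. (f ^^ k) x",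
        OF compact funpow_in_X[OF assms(1)] \<open>infinite S\<close> \<open>\<delta> > 0\<close>] by blast
  then show False using return by (fastforce simp: S_def dist_commute)
qed

lemma periodic_if_shadows_periodic_orbit:
  assumes "inj_on f X" "x \<in> X" "w \<in> periodic_points X f"
    and shadow: "\<And>i. dist ((f ^^ (K + i)) x) ((f ^^ i) w) \<le> c / 2"
  shows "x \<in> periodic_points X f"
proof -
  obtain l where "l > 0" "(f ^^ l) w = w" using assms(3) by (auto simp: periodic_points_def)
  define z where "z = (f ^^ K) x"
  have "z \<in> X" using assms(2) by (simp add: z_def funpow_in_X)
  have "dist ((f ^^ i) ((f ^^ (m * l)) z)) ((f ^^ i) w) \<le> c / 2" for m i
  proof -
    have "(f ^^ i) ((f ^^ (m * l)) z) = (f ^^ (K + (m * l + i))) x"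
      by (simp only: z_def flip: funpow_add_apply) (simp add: ac_simps)
    moreover have "(f ^^ (m * l + i)) w = (f ^^ i) w"
      using funpow_mod_eq[where m = "m * l + i", OF \<open>(f ^^ l) w = w\<close>]
        funpow_mod_eq[where m = i, OF \<open>(f ^^ l) w = w\<close>] by simp
    ultimately show ?thesis using shadow[of "m * l + i"] by simp
  qed
  moreover have "dist ((f ^^ i) z) ((f ^^ i) w) \<le> c / 2" for i
    using shadow[of i] by (simp add: z_def funpow_add_apply funpow_swap_apply)
  ultimately have "(f ^^ (m * l)) z \<in> stable_set X f c z" for m
    using mem_stable_set_if_shadow_same[where s = "\<lambda>i. (f ^^ i) w"] funpow_in_X[OF \<open>z \<in> X\<close>]
    by blast
  then obtain m where "(f ^^ (m * l)) z \<in> periodic_points X f"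
    using periodic_point_if_multiples_in_finite_set[where f = f, OF \<open>z \<in> X\<close> maps \<open>l > 0\<close>]
      finite_stable_set[OF \<open>z \<in> X\<close>] by blast
  then have "(f ^^ (m * l + K)) x \<in> periodic_points X f"
    by (simp add: z_def funpow_add_apply)
  then show ?thesis using periodic_if_iterate_periodic[OF assms(1) maps assms(2)] by blast
qed

lemma subset_periodic_points:
  assumes "continuous_on X f" "inj_on f X"
  shows "X \<subseteq> periodic_points X f"
proof
  fix x assume "x \<in> X"
  obtain \<eta> where "\<eta> > 0" and separated: "\<And>p q. p \<in> periodic_points X f \<Longrightarrow> q \<in> periodic_points X f \<Longrightarrow>
      p \<noteq> q \<Longrightarrow> \<eta> \<le> dist p q"
    using finite_set_separated[OF finite_periodic_points] by blast
  obtain d where "d > 0" and d: "\<forall>u\<in>X. \<forall>v\<in>X. dist v u < d \<longrightarrow> dist (f v) (f u) < \<eta> / 2"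
    using compact_uniformly_continuous[OF assms(1) compact] \<open>\<eta> > 0\<close>
    unfolding uniformly_continuous_on_def by (meson half_gt_zero)
  define \<rho> where "\<rho> = min (min (\<eta> / 2) d) (c / 2)"
  have "\<rho> > 0" "\<rho> \<le> \<eta> / 2" "\<rho> \<le> d" "\<rho> \<le> c / 2"
    using \<open>\<eta> > 0\<close> \<open>d > 0\<close> c_pos by (simp_all add: \<rho>_def)
  then obtain K where near: "\<And>k. k \<ge> K \<Longrightarrow> \<exists>p\<in>periodic_points X f. dist ((f ^^ k) x) p < \<rho>"
    using eventually_near_periodic_points[OF \<open>x \<in> X\<close> \<open>\<rho> > 0\<close>] by blast
  have P_sub: "periodic_points X f \<subseteq> X" by (auto simp: periodic_points_def)
  have P_inv: "\<And>p. p \<in> periodic_points X f \<Longrightarrow> f p \<in> periodic_points X f"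
    using periodic_points_funpow[where f = f and k = 1, OF maps] by simp
  have sep: "\<eta> / 2 + \<rho> \<le> dist p q"
    if "p \<in> periodic_points X f" "q \<in> periodic_points X f" "p \<noteq> q" for p q
    using separated[OF that] \<open>\<rho> \<le> \<eta> / 2\<close> by linarith
  have cont: "dist (f u) (f v) < \<eta> / 2" if "u \<in> X" "v \<in> X" "dist u v < \<rho>" for u v
    using d that \<open>\<rho> \<le> d\<close> by (simp add: dist_commute)
  obtain w where w: "w \<in> periodic_points X f" "\<And>i. dist ((f ^^ (K + i)) x) ((f ^^ i) w) < \<rho>"
    using orbit_tracks_single_orbit[where f = f, OF maps \<open>x \<in> X\<close> P_sub P_inv sep cont near] by blast
  have "dist ((f ^^ (K + i)) x) ((f ^^ i) w) \<le> c / 2" for i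
    using w(2)[of i] \<open>\<rho> \<le> c / 2\<close> by linarith
  then show "x \<in> periodic_points X f"
    by (rule periodic_if_shadows_periodic_orbit[OF assms(2) \<open>x \<in> X\<close> w(1)])
qed

end

theorem theorem2p5:
  fixes X :: "'a::metric_space set" and f :: "'a \<Rightarrow> 'a" and n :: nat
  assumes "compact X"
    and "\<exists>g. homeomorphism X X f g"
    and "pos_n_expansive X f n"
    and "shadowing X f"
    and "finite (chain_class X f ` {x. chain_recurrent X f x})"
  shows "finite X"
proof -
  obtain g where "homeomorphism X X f g" using assms(2) by blast
  then have "continuous_on X f" "inj_on f X" "\<And>x. x \<in> X \<Longrightarrow> f x \<in> X"
    unfolding homeomorphism_def by (auto intro: inj_on_inverseI)
  obtain c where "c > 0" "\<And>x. x \<in> X \<Longrightarrow> finite (stable_set X f c x)"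
    "\<And>x. x \<in> X \<Longrightarrow> card (stable_set X f c x) \<le> n"
    using assms(3) unfolding pos_n_expansive_def stable_set_def by blast
  then interpret positively_expansive_shadowing X f c n
    using assms(1,4) \<open>\<And>x. x \<in> X \<Longrightarrow> f x \<in> X\<close> by unfold_locales
  have "X \<subseteq> periodic_points X f"
    using subset_periodic_points \<open>continuous_on X f\<close> \<open>inj_on f X\<close> by blast
  moreover have "periodic_points X f \<subseteq> X" by (auto simp: periodic_points_def)
  ultimately show ?thesis using finite_periodic_points finite_subset by blast
qed

end
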